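(* Let $\mathcal{O}$ be a $\Bbbk$-linear cyclic operad with multiplication and consider the associated cocyclic module with cochain complex $\mathcal{C}^*(\mathcal{O})$. Then the cyclic cochains $\mathcal{C}^n_\lambda(\mathcal{O})=\{f\in\mathcal{O}(n):\tau_nf=(-1)^nf\}$ form a subcomplex $\mathcal{C}^*_\lambda(\mathcal{O})$ of $\mathcal{C}^*(\mathcal{O})$ which is stable under the Lie bracket of degree $-1$. In particular, the cyclic cohomology $HC^*_\lambda(\mathcal{C}^*(\mathcal{O}))$ (the cohomology of $\mathcal{C}^*_\lambda(\mathcal{O})$) has naturally a structure of graded Lie algebra of degree $-1$.
   Context: $\Bbbk$ is a commutative ring. A non-symmetric operad $\mathcal{O}$ has modules $\mathcal{O}(n)$, an identity $id\in\mathcal{O}(1)$ and associative unital partial compositions $\circ_i:\mathcal{O}(m)\otimes\mathcal{O}(n)\to\mathcal{O}(m+n-1)$. It is cyclic if equipped with linear maps $\tau_n:\mathcal{O}(n)\to\mathcal{O}(n)$ with $\tau_n^{n+1}=id$, $\tau_{m+n-1}(f\circ_1g)=\tau_ng\circ_n\tau_mf$ for $m,n\ge1$, and $\tau_{m+n-1}(f\circ_ig)=\tau_mf\circ_{i-1}g$ for $m\ge2$, $n\ge0$, $2\le i\le m$. A cyclic operad with multiplication is a cyclic operad with $\mu\in\mathcal{O}(2)$, $e\in\mathcal{O}(0)$ such that $\mu\circ_1\mu=\mu\circ_2\mu$, $\mu\circ_1e=id=\mu\circ_2e$ and $\tau_2\mu=\mu$. The cochain complex $\mathcal{C}^*(\mathcal{O})$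 has $\mathcal{O}(n)$ in degree $n$ and differential $df=\mu\circ_2f+\sum_{i=1}^n(-1)^if\circ_i\mu+(-1)^{n+1}\mu\circ_1f$ (cofaces $\delta_0f=\mu\circ_2f$, $\delta_if=f\circ_i\mu$, $\delta_{n+1}f=\mu\circ_1f$, codegeneracies $\sigma_{i-1}f=f\circ_ie$, cyclic operators $\tau_n$). The Lie bracket of degree $-1$ on $\mathcal{C}^*(\mathcal{O})$ is $\{f,g\}=f\bar\circ g-(-1)^{(m-1)(n-1)}g\bar\circ f$ with $f\bar\circ g=(-1)^{(m-1)(n-1)}\sum_{i=1}^m(-1)^{(n-1)(i-1)}f\circ_ig$ for $f\in\mathcal{O}(m)$, $g\in\mathcal{O}(n)$. *)

theory Defs
  imports Main
begin

text \<open>Graded k-module encoding: all operations live in one ambient k-module of type 'a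
  (scalar multiplication sm over the commutative ring 'k); the arity-n component
  Op(n) is the submodule  Op n :: 'a set.  Partial composition  pcomp m n i f g  is
  f \<circ>_i g for f in Op(m), g in Op(n); cyclic operators  tau n  act on Op(n).\<close>

definition submodule :: "('k::comm_ring_1 \<Rightarrow> 'a::ab_group_add \<Rightarrow> 'a) \<Rightarrow> 'a set \<Rightarrow> bool" where
  "submodule sm S \<longleftrightarrow> 0 \<in> S \<and> (\<forall>x\<in>S. \<forall>y\<in>S. x + y \<in> S) \<and> (\<forall>a. \<forall>x\<in>S. sm a x \<in> S)"

definition sgnx :: "int \<Rightarrow> 'a::ab_group_add \<Rightarrow> 'a" where
  "sgnx k x = (if even k then x else - x)"

locale kmodule =
  fixes sm :: "'k::comm_ring_1 \<Rightarrow> 'a::ab_group_add \<Rightarrow> 'a"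
  assumes sm_add_right: "sm a (x + y) = sm a x + sm a y"
    and sm_add_left: "sm (a + b) x = sm a x + sm b x"
    and sm_assoc: "sm (a * b) x = sm a (sm b x)"
    and sm_one: "sm 1 x = x"

locale ns_operad = kmodule sm
  for sm :: "'k::comm_ring_1 \<Rightarrow> 'a::ab_group_add \<Rightarrow> 'a" +
  fixes Op :: "nat \<Rightarrow> 'a set"
    and pcomp :: "nat \<Rightarrow> nat \<Rightarrow> nat \<Rightarrow> 'a \<Rightarrow> 'a \<Rightarrow> 'a"
    and ident :: 'a
  assumes O_submodule: "submodule sm (Op n)"
    and comp_closed: "\<lbrakk>f \<in> Op m; g \<in> Op n; 1 \<le> i; i \<le> m\<rbrakk> \<Longrightarrow> pcomp m n i f g \<in> Op (m + n - 1)"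
    and comp_linear_left: "\<lbrakk>f \<in> Op m; f' \<in> Op m; g \<in> Op n; 1 \<le> i; i \<le> m\<rbrakk> \<Longrightarrow>
        pcomp m n i (sm a f + sm b f') g = sm a (pcomp m n i f g) + sm b (pcomp m n i f' g)"
    and comp_linear_right: "\<lbrakk>f \<in> Op m; g \<in> Op n; g' \<in> Op n; 1 \<le> i; i \<le> m\<rbrakk> \<Longrightarrow>
        pcomp m n i f (sm a g + sm b g') = sm a (pcomp m n i f g) + sm b (pcomp m n i f g')"
    and ident_in: "ident \<in> Op 1"
    and ident_left: "f \<in> Op n \<Longrightarrow> pcomp 1 n 1 ident f = f"
    and ident_right: "\<lbrakk>f \<in> Op m; 1 \<le> i; i \<le> m\<rbrakk> \<Longrightarrow> pcomp m 1 i f ident = f"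
    and assoc_seq: "\<lbrakk>f \<in> Op m; g \<in> Op n; h \<in> Op p; 1 \<le> i; i \<le> m; 1 \<le> j; j \<le> n\<rbrakk> \<Longrightarrow>
        pcomp (m + n - 1) p (i + j - 1) (pcomp m n i f g) h = pcomp m (n + p - 1) i f (pcomp n p j g h)"
    and assoc_par: "\<lbrakk>f \<in> Op m; g \<in> Op n; h \<in> Op p; 1 \<le> i; i < k; k \<le> m\<rbrakk> \<Longrightarrow>
        pcomp (m + n - 1) p (k + n - 1) (pcomp m n i f g) h = pcomp (m + p - 1) n i (pcomp m p k f h) g"

locale cyclic_operad = ns_operad sm Op pcomp ident
  for sm :: "'k::comm_ring_1 \<Rightarrow> 'a::ab_group_add \<Rightarrow> 'a"
    and Op pcomp ident +
  fixes tau :: "nat \<Rightarrow> 'a \<Rightarrow> 'a"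
  assumes tau_closed: "f \<in> Op n \<Longrightarrow> tau n f \<in> Op n"
    and tau_linear: "\<lbrakk>f \<in> Op n; g \<in> Op n\<rbrakk> \<Longrightarrow> tau n (sm a f + sm b g) = sm a (tau n f) + sm b (tau n g)"
    and tau_order: "f \<in> Op n \<Longrightarrow> (tau n ^^ (n + 1)) f = f"
    and tau_comp1: "\<lbrakk>f \<in> Op m; g \<in> Op n; 1 \<le> m; 1 \<le> n\<rbrakk> \<Longrightarrow>
        tau (m + n - 1) (pcomp m n 1 f g) = pcomp n m n (tau n g) (tau m f)"
    and tau_compi: "\<lbrakk>f \<in> Op m; g \<in> Op n; 2 \<le> m; 2 \<le> i; i \<le> m\<rbrakk> \<Longrightarrow>
        tau (m + n - 1) (pcomp m n i f g) = pcomp m n (i - 1) (tau m f) g"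

locale cyclic_operad_mult = cyclic_operad sm Op pcomp ident tau
  for sm :: "'k::comm_ring_1 \<Rightarrow> 'a::ab_group_add \<Rightarrow> 'a"
    and Op pcomp ident tau +
  fixes mu :: 'a and e :: 'a
  assumes mu_in: "mu \<in> Op 2"
    and e_in: "e \<in> Op 0"
    and mu_assoc: "pcomp 2 2 1 mu mu = pcomp 2 2 2 mu mu"
    and mu_unit1: "pcomp 2 0 1 mu e = ident"
    and mu_unit2: "pcomp 2 0 2 mu e = ident"
    and mu_cyclic: "tau 2 mu = mu"

definition cdiff :: "(nat \<Rightarrow> nat \<Rightarrow> nat \<Rightarrow> 'a \<Rightarrow> 'a \<Rightarrow> 'a) \<Rightarrow> 'a \<Rightarrow> nat \<Rightarrow> 'a \<Rightarrow> 'a::ab_group_add" where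
  "cdiff pcomp mu n f = pcomp 2 n 2 mu f
     + (\<Sum>i=1..n. sgnx (int i) (pcomp n 2 i f mu))
     + sgnx (int n + 1) (pcomp 2 n 1 mu f)"

text \<open>f \<bar>\<circ> g for f in Op(m), g in Op(n); signs use integer arithmetic so (m-1) = -1 when m = 0.\<close>
definition circ_bar :: "(nat \<Rightarrow> nat \<Rightarrow> nat \<Rightarrow> 'a \<Rightarrow> 'a \<Rightarrow> 'a) \<Rightarrow> nat \<Rightarrow> nat \<Rightarrow> 'a \<Rightarrow> 'a \<Rightarrow> 'a::ab_group_add" where
  "circ_bar pcomp m n f g = sgnx ((int m - 1) * (int n - 1))
     (\<Sum>i=1..m. sgnx ((int n - 1) * (int i - 1)) (pcomp m n i f g))"

definition bracket :: "(nat \<Rightarrow> nat \<Rightarrow> nat \<Rightarrow> 'a \<Rightarrow> 'a \<Rightarrow> 'a) \<Rightarrow> nat \<Rightarrow> nat \<Rightarrow> 'a \<Rightarrow> 'a \<Rightarrow> 'a::ab_group_add" where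
  "bracket pcomp m n f g = circ_bar pcomp m n f g
     - sgnx ((int m - 1) * (int n - 1)) (circ_bar pcomp n m g f)"

definition cyc_cochains :: "(nat \<Rightarrow> 'a set) \<Rightarrow> (nat \<Rightarrow> 'a \<Rightarrow> 'a) \<Rightarrow> nat \<Rightarrow> 'a::ab_group_add set" where
  "cyc_cochains Op tau n = {f \<in> Op n. tau n f = sgnx (int n) f}"

end

theory Submission
  imports Defs
begin

text \<open>The cyclic operator rotates the inputs of a composite: on \<open>f \<circ>\<^sub>i g\<close> with \<open>i \<ge> 2\<close> it moves
  the slot of \<open>g\<close> one step to the left, and on \<open>f \<circ>\<^sub>1 g\<close> it exchanges the roles of \<open>f\<close> and
  \<open>g\<close>. Hence, for cyclic cochains, applying \<open>\<tau>\<close> to the alternating sum \<open>f \<bar>\<circ> g\<close> reproduces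
  the same sum up to the sign \<open>(-1)\<^sup>m\<^sup>+\<^sup>n\<^sup>-\<^sup>1\<close>, except for a boundary term at each end. For the
  Lie bracket the boundary terms of \<open>f \<bar>\<circ> g\<close> and \<open>g \<bar>\<circ> f\<close> cancel pairwise; the differential
  is \<open>\<mu> \<circ>\<^sub>2 f \<plusminus> f \<bar>\<circ> \<mu> \<plusminus> \<mu> \<circ>\<^sub>1 f\<close>, and there the boundary terms cancel against the two
  outer summands because \<open>\<mu>\<close> is cyclic.\<close>

lemma sgnx_sgnx: "sgnx k (sgnx l x) = sgnx (k + l) x"
  by (auto simp: sgnx_def)

lemma sgnx_zero [simp]: "sgnx k 0 = 0"
  by (simp add: sgnx_def)

lemma sgnx_add: "sgnx k (x + y) = sgnx k x + sgnx k y"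
  by (auto simp: sgnx_def)

lemma sgnx_diff: "sgnx k (x - y) = sgnx k x - sgnx k y"
  by (auto simp: sgnx_def)

lemma sgnx_sum: "sgnx k (sum f A) = (\<Sum>i\<in>A. sgnx k (f i))"
  by (auto simp: sgnx_def sum_negf)

lemma cdiff_eq_circ_bar:
  "cdiff pcomp mu n f = pcomp 2 n 2 mu f + sgnx (int n) (circ_bar pcomp n 2 f mu)
     + sgnx (int n + 1) (pcomp 2 n 1 mu f)"
  unfolding cdiff_def circ_bar_def
  by (simp add: sgnx_sgnx sgnx_sum) (simp add: sgnx_def)

lemma alternating_sum_shift:
  fixes T :: "'a::ab_group_add \<Rightarrow> 'a" and x :: "nat \<Rightarrow> 'a"
  assumes T_add: "\<And>u v. u \<in> S \<Longrightarrow> v \<in> S \<Longrightarrow> T (u + v) = T u + T v"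
    and T_sgnx: "\<And>u k. u \<in> S \<Longrightarrow> T (sgnx k u) = sgnx k (T u)"
    and S_add: "\<And>u v. u \<in> S \<Longrightarrow> v \<in> S \<Longrightarrow> u + v \<in> S"
    and S_sgnx: "\<And>u k. u \<in> S \<Longrightarrow> sgnx k u \<in> S"
    and x_in: "\<And>i. 1 \<le> i \<Longrightarrow> i \<le> m \<Longrightarrow> x i \<in> S"
    and T_x: "\<And>i. 2 \<le> i \<Longrightarrow> i \<le> m \<Longrightarrow> T (x i) = sgnx a (x (i - 1))"
    and "1 \<le> m"
  shows "T (\<Sum>i=1..m. sgnx (c * (int i - 1)) (x i)) = T (x 1)
     + sgnx (a + c) (\<Sum>i=1..m. sgnx (c * (int i - 1)) (x i)) - sgnx (c * (int m - 1) + a + c) (x m)"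
proof -
  let ?S = "\<lambda>k. \<Sum>i=1..k. sgnx (c * (int i - 1)) (x i)"
  have S_in: "?S k \<in> S" if "1 \<le> k" "k \<le> m" for k
    using that
  proof (induction k rule: nat_induct_at_least)
    case (Suc k)
    then show ?case using S_add S_sgnx x_in by simp
  qed (use S_sgnx x_in in simp)
  have "T (?S k) = T (x 1) + sgnx (a + c) (?S k) - sgnx (c * (int k - 1) + a + c) (x k)"
    if "1 \<le> k" "k \<le> m" for k
    using that
  proof (induction k rule: nat_induct_at_least)
    case base
    show ?case using T_sgnx[of "x 1" 0] x_in \<open>1 \<le> m\<close> by (simp add: sgnx_def)
  next
    case (Suc k)
    have "T (?S (Suc k)) = T (?S k) + sgnx (c * int k) (T (x (Suc k)))"
      using T_add T_sgnx S_in S_sgnx x_in Suc by simp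
    also have "T (x (Suc k)) = sgnx a (x k)"
      using T_x[of "Suc k"] Suc by simp
    finally show ?case
      using Suc by (simp add: sgnx_add sgnx_sgnx algebra_simps)
  qed
  then show ?thesis using \<open>1 \<le> m\<close> by simp
qed

context kmodule
begin

lemma sm_zero_left: "sm 0 x = 0"
  using sm_add_left[of 0 0 x] by simp

lemma sm_zero_right: "sm a 0 = 0"
  using sm_add_right[of a 0 0] by simp

lemma sm_minus_one: "sm (-1) x = - x"
  using sm_add_left[of 1 "-1" x] by (simp add: sm_zero_left sm_one add_eq_0_iff)

lemma sm_minus_right: "sm a (- x) = - sm a x"
  using sm_add_right[of a x "- x"] by (simp add: sm_zero_right add_eq_0_iff)

lemma sm_sgnx: "sm a (sgnx k x) = sgnx k (sm a x)"
  by (simp add: sgnx_def sm_minus_right)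

end

context ns_operad
begin

lemma Op_zero: "0 \<in> Op n"
  and Op_add: "x \<in> Op n \<Longrightarrow> y \<in> Op n \<Longrightarrow> x + y \<in> Op n"
  and Op_sm: "x \<in> Op n \<Longrightarrow> sm a x \<in> Op n"
  using O_submodule[of n] unfolding submodule_def by blast+

lemma Op_uminus: "x \<in> Op n \<Longrightarrow> - x \<in> Op n"
  using Op_sm[of x n "-1"] by (simp add: sm_minus_one)

lemma Op_diff: "x \<in> Op n \<Longrightarrow> y \<in> Op n \<Longrightarrow> x - y \<in> Op n"
  using Op_add Op_uminus by (metis diff_conv_add_uminus)

lemma Op_sgnx: "x \<in> Op n \<Longrightarrow> sgnx k x \<in> Op n"
  by (simp add: sgnx_def Op_uminus)

lemma Op_sum: "(\<And>i. i \<in> A \<Longrightarrow> f i \<in> Op n) \<Longrightarrow> sum f A \<in> Op n"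
  by (induction A rule: infinite_finite_induct) (auto simp: Op_zero Op_add)

lemma pcomp_sgnx_left:
  "\<lbrakk>f \<in> Op m; g \<in> Op n; 1 \<le> i; i \<le> m\<rbrakk> \<Longrightarrow> pcomp m n i (sgnx k f) g = sgnx k (pcomp m n i f g)"
  using comp_linear_left[of f m f g n i "-1" 0]
  by (simp add: sgnx_def sm_minus_one sm_zero_left)

lemma pcomp_sgnx_right:
  "\<lbrakk>f \<in> Op m; g \<in> Op n; 1 \<le> i; i \<le> m\<rbrakk> \<Longrightarrow> pcomp m n i f (sgnx k g) = sgnx k (pcomp m n i f g)"
  using comp_linear_right[of f m g n g i "-1" 0]
  by (simp add: sgnx_def sm_minus_one sm_zero_left)

lemma circ_bar_closed:
  assumes "f \<in> Op m" "g \<in> Op n"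
  shows "circ_bar pcomp m n f g \<in> Op (m + n - 1)"
  unfolding circ_bar_def using assms by (intro Op_sgnx Op_sum comp_closed) auto

lemma bracket_closed:
  assumes "f \<in> Op m" "g \<in> Op n"
  shows "bracket pcomp m n f g \<in> Op (m + n - 1)"
  using circ_bar_closed[OF assms] circ_bar_closed[OF assms(2,1)]
  unfolding bracket_def by (simp add: Op_diff Op_sgnx add.commute)

end

context cyclic_operad
begin

lemma tau_add: "x \<in> Op n \<Longrightarrow> y \<in> Op n \<Longrightarrow> tau n (x + y) = tau n x + tau n y"
  using tau_linear[of x n y 1 1] by (simp add: sm_one)

lemma tau_sm: "x \<in> Op n \<Longrightarrow> tau n (sm a x) = sm a (tau n x)"
  using tau_linear[of x n x a 0] by (simp add: sm_zero_left)

lemma tau_uminus: "x \<in> Op n \<Longrightarrow> tau n (- x) = - tau n x"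
  using tau_sm[of x n "-1"] by (simp add: sm_minus_one)

lemma tau_zero: "tau n 0 = 0"
  using tau_add[OF Op_zero Op_zero, of n] by simp

lemma tau_diff: "x \<in> Op n \<Longrightarrow> y \<in> Op n \<Longrightarrow> tau n (x - y) = tau n x - tau n y"
  by (metis diff_conv_add_uminus tau_add tau_uminus Op_uminus)

lemma tau_sgnx: "x \<in> Op n \<Longrightarrow> tau n (sgnx k x) = sgnx k (tau n x)"
  by (simp add: sgnx_def tau_uminus)

lemma tau_Op0: "x \<in> Op 0 \<Longrightarrow> tau 0 x = x"
  using tau_order[of x 0] by simp

lemma tau_Op1_involutive: "x \<in> Op 1 \<Longrightarrow> tau 1 (tau 1 x) = x"
  using tau_order[of x 1] by (simp add: numeral_2_eq_2)

lemma cyc_cochainsD: "f \<in> cyc_cochains Op tau n \<Longrightarrow> f \<in> Op n \<and> tau n f = sgnx (int n) f"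
  by (simp add: cyc_cochains_def)

lemma submodule_cyc_cochains: "submodule sm (cyc_cochains Op tau n)"
  unfolding submodule_def cyc_cochains_def
  by (auto simp: Op_zero Op_add Op_sm tau_zero tau_add tau_sm sgnx_add sm_sgnx)

text \<open>Each application of \<open>\<tau>\<close> moves the slot of \<open>z\<close> one step to the left, so \<open>\<tau>\<^sup>p\<^sup>-\<^sup>1\<close> carries
  \<open>h \<circ>\<^sub>p z\<close> to \<open>h \<circ>\<^sub>1 z\<close> (the signs cancel), and one more step closes the cycle since \<open>\<tau>\<^sup>p = id\<close>
  on \<open>Op(p - 1)\<close>.\<close>

lemma tau_pcomp_nullary_first:
  assumes h: "h \<in> cyc_cochains Op tau p" and z: "z \<in> Op 0" and p: "2 \<le> p"
  shows "tau (p - 1) (pcomp p 0 1 h z) = pcomp p 0 p h z"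
proof -
  have h_in: "h \<in> Op p" and h_cyc: "tau p h = sgnx (int p) h"
    using cyc_cochainsD[OF h] by auto
  define w where "w k = pcomp p 0 k h z" for k
  have w_in: "w k \<in> Op (p - 1)" if "1 \<le> k" "k \<le> p" for k
    using comp_closed[OF h_in z that] unfolding w_def by simp
  have tau_w: "tau (p - 1) (w k) = sgnx (int p) (w (k - 1))" if "2 \<le> k" "k \<le> p" for k
    using tau_compi[OF h_in z p that] h_cyc pcomp_sgnx_left[OF h_in z, of "k - 1"] that
    unfolding w_def by simp
  have tau_pow_w: "(tau (p - 1) ^^ k) (w p) = sgnx (int p * int k) (w (p - k))" if "k \<le> p - 1" for k
    using that
  proof (induction k)
    case (Suc k)
    then show ?case
      using tau_sgnx w_in tau_w by (simp add: sgnx_sgnx algebra_simps)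
  qed (simp add: sgnx_def)
  have "(tau (p - 1) ^^ (p - 1)) (w p) = w 1"
    using tau_pow_w[of "p - 1"] p by (simp add: sgnx_def of_nat_diff)
  moreover have "(tau (p - 1) ^^ (p - 1 + 1)) (w p) = w p"
    using tau_order[OF w_in[of p]] p by simp
  ultimately show ?thesis
    using p unfolding w_def by (metis funpow.simps(2) o_apply Suc_eq_plus1)
qed

lemma tau_pcomp_first:
  assumes f: "f \<in> cyc_cochains Op tau m" and g: "g \<in> cyc_cochains Op tau n"
    and "1 \<le> m" "1 \<le> n"
  shows "tau (m + n - 1) (pcomp m n 1 f g) = sgnx (int m + int n) (pcomp n m n g f)"
  using tau_comp1[of f m g n] assms cyc_cochainsD[OF f] cyc_cochainsD[OF g]
    pcomp_sgnx_left[of g n "sgnx (int m) f" m n "int n"] pcomp_sgnx_right[of g n f m n "int m"]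
  by (simp add: Op_sgnx sgnx_sgnx add.commute)

lemma tau_circ_bar:
  assumes f: "f \<in> cyc_cochains Op tau m" and g: "g \<in> Op n" and m: "1 \<le> m"
  shows "tau (m + n - 1) (circ_bar pcomp m n f g)
    = sgnx ((int m - 1) * (int n - 1)) (tau (m + n - 1) (pcomp m n 1 f g))
      + sgnx (int m + int n - 1) (circ_bar pcomp m n f g - pcomp m n m f g)"
proof -
  have f_in: "f \<in> Op m" and f_cyc: "tau m f = sgnx (int m) f"
    using cyc_cochainsD[OF f] by auto
  define N where "N = m + n - 1"
  define x where "x i = pcomp m n i f g" for i
  define X where "X = (\<Sum>i=1..m. sgnx ((int n - 1) * (int i - 1)) (x i))"
  have x_in: "x i \<in> Op N" if "1 \<le> i" "i \<le> m" for i
    using comp_closed[OF f_in g that] unfolding x_def N_def by simp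
  have X_in: "X \<in> Op N"
    unfolding X_def by (intro Op_sum) (simp add: Op_sgnx x_in)
  have tau_x: "tau N (x i) = sgnx (int m) (x (i - 1))" if "2 \<le> i" "i \<le> m" for i
    using tau_compi[OF f_in g _ that] that f_cyc pcomp_sgnx_left[OF f_in g, of "i - 1"]
    unfolding x_def N_def by simp
  have tau_X: "tau N X = tau N (x 1) + sgnx (int m + (int n - 1)) X
      - sgnx ((int n - 1) * (int m - 1) + int m + (int n - 1)) (x m)"
    unfolding X_def
    by (rule alternating_sum_shift[where S = "Op N"])
       (use m in \<open>auto simp: tau_add tau_sgnx Op_add Op_sgnx x_in tau_x\<close>)
  have "circ_bar pcomp m n f g = sgnx ((int m - 1) * (int n - 1)) X"
    unfolding circ_bar_def X_def x_def ..
  then show ?thesis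
    using X_in m unfolding N_def[symmetric]
    by (simp add: tau_sgnx tau_X x_def sgnx_add sgnx_diff sgnx_sgnx algebra_simps)
      (simp add: sgnx_def)
qed

lemma bracket_cyc_cochains:
  assumes f: "f \<in> cyc_cochains Op tau m" and g: "g \<in> cyc_cochains Op tau n"
  shows "bracket pcomp m n f g \<in> cyc_cochains Op tau (m + n - 1)"
proof -
  have f_in: "f \<in> Op m" and g_in: "g \<in> Op n"
    using cyc_cochainsD[OF f] cyc_cochainsD[OF g] by auto
  define N where "N = m + n - 1"
  define \<epsilon> where "\<epsilon> = (int m - 1) * (int n - 1)"
  have closed: "bracket pcomp m n f g \<in> Op N"
    using bracket_closed[OF f_in g_in] unfolding N_def .
  have fg_in: "circ_bar pcomp m n f g \<in> Op N" and gf_in: "circ_bar pcomp n m g f \<in> Op N"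
    using circ_bar_closed[OF f_in g_in] circ_bar_closed[OF g_in f_in] unfolding N_def
    by (simp_all add: add.commute)
  have tau_bracket: "tau N (bracket pcomp m n f g)
      = tau N (circ_bar pcomp m n f g) - sgnx \<epsilon> (tau N (circ_bar pcomp n m g f))"
    unfolding bracket_def \<epsilon>_def using fg_in gf_in by (simp add: tau_diff tau_sgnx Op_sgnx)
  have "tau N (bracket pcomp m n f g) = sgnx (int N) (bracket pcomp m n f g)"
  proof (cases "m + n \<le> 1")
    case True
    then show ?thesis using closed tau_Op0 by (simp add: N_def sgnx_def)
  next
    case False
    then have N: "int N = int m + int n - 1" unfolding N_def by simp
    consider "m = 0" "2 \<le> n" | "n = 0" "2 \<le> m" | "1 \<le> m" "1 \<le> n"
      using False by linarith
    then show ?thesis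
    proof cases
      case 1
      have "tau N (pcomp n m 1 g f) = pcomp n m n g f"
        using tau_pcomp_nullary_first[OF g, of f] 1 f_in by (simp add: N_def)
      then show ?thesis
        using tau_circ_bar[OF g f_in] 1 unfolding tau_bracket
        by (simp add: N_def \<epsilon>_def bracket_def circ_bar_def sgnx_diff sgnx_sgnx tau_zero)
          (simp add: sgnx_def)
    next
      case 2
      have "tau N (pcomp m n 1 f g) = pcomp m n m f g"
        using tau_pcomp_nullary_first[OF f, of g] 2 g_in by (simp add: N_def)
      then show ?thesis
        using tau_circ_bar[OF f g_in] 2 unfolding tau_bracket
        by (simp add: N_def \<epsilon>_def bracket_def circ_bar_def sgnx_diff sgnx_sgnx tau_zero)
          (simp add: sgnx_def)
    next
      case 3
      show ?thesis
        using tau_circ_bar[OF f g_in] tau_circ_bar[OF g f_in]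
          tau_pcomp_first[OF f g] tau_pcomp_first[OF g f] 3
        unfolding tau_bracket unfolding N bracket_def
        by (simp add: N_def \<epsilon>_def add.commute sgnx_add sgnx_diff sgnx_sgnx)
          (cases "even m"; cases "even n"; simp add: sgnx_def algebra_simps)
    qed
  qed
  then show ?thesis
    using closed unfolding N_def cyc_cochains_def by simp
qed

end

context cyclic_operad_mult
begin

lemma mu_cyc_cochains: "mu \<in> cyc_cochains Op tau 2"
  using mu_in mu_cyclic by (simp add: cyc_cochains_def sgnx_def)

lemma cdiff_cyc_cochains:
  assumes f: "f \<in> cyc_cochains Op tau n"
  shows "cdiff pcomp mu n f \<in> cyc_cochains Op tau (Suc n)"
proof -
  have f_in: "f \<in> Op n" using cyc_cochainsD[OF f] by auto
  define A where "A = pcomp 2 n 1 mu f"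
  define B where "B = pcomp 2 n 2 mu f"
  define C where "C = circ_bar pcomp n 2 f mu"
  have A_in: "A \<in> Op (Suc n)" and B_in: "B \<in> Op (Suc n)" and C_in: "C \<in> Op (Suc n)"
    using comp_closed[OF mu_in f_in, of 1] comp_closed[OF mu_in f_in, of 2]
      circ_bar_closed[OF f_in mu_in]
    unfolding A_def B_def C_def by simp_all
  have d_eq: "cdiff pcomp mu n f = B + sgnx (int n) C + sgnx (int n + 1) A"
    unfolding A_def B_def C_def by (rule cdiff_eq_circ_bar)
  have tau_B: "tau (Suc n) B = A"
    using tau_compi[OF mu_in f_in, of 2] mu_cyclic unfolding A_def B_def by simp
  have "tau (Suc n) (cdiff pcomp mu n f) = sgnx (int (Suc n)) (cdiff pcomp mu n f)"
  proof (cases "n = 0")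
    case True
    then have "C = 0" unfolding C_def circ_bar_def by simp
    moreover have "tau (Suc n) A = B"
      using tau_B tau_Op1_involutive[of B] B_in True by simp
    ultimately show ?thesis
      unfolding d_eq using A_in B_in tau_B True by (simp add: tau_diff sgnx_def)
  next
    case False
    then have n: "1 \<le> n" by simp
    have tau_A: "tau (Suc n) A = sgnx (int n) (pcomp n 2 n f mu)"
      using tau_pcomp_first[OF mu_cyc_cochains f] n unfolding A_def
      by simp (simp add: sgnx_def)
    have "tau (Suc n) (pcomp n 2 1 f mu) = sgnx (int n) B"
      using tau_pcomp_first[OF f mu_cyc_cochains] n unfolding B_def
      by simp (simp add: sgnx_def)
    then have tau_C: "tau (Suc n) C = sgnx (int n - 1) (sgnx (int n) B)
        + sgnx (int n + 1) (C - pcomp n 2 n f mu)"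
      using tau_circ_bar[OF f mu_in n] unfolding C_def by (simp add: add.commute)
    show ?thesis
      unfolding d_eq using A_in B_in C_in
      by (simp add: tau_add tau_sgnx Op_add Op_sgnx tau_A tau_B tau_C sgnx_add sgnx_diff sgnx_sgnx)
        (cases "even n"; simp add: sgnx_def algebra_simps)
  qed
  moreover have "cdiff pcomp mu n f \<in> Op (Suc n)"
    unfolding d_eq using A_in B_in C_in by (simp add: Op_add Op_sgnx)
  ultimately show ?thesis by (simp add: cyc_cochains_def)
qed

end

theorem theorem5p5:
  fixes sm :: "'k::comm_ring_1 \<Rightarrow> 'a::ab_group_add \<Rightarrow> 'a"
    and Op :: "nat \<Rightarrow> 'a set"
    and pcomp :: "nat \<Rightarrow> nat \<Rightarrow> nat \<Rightarrow> 'a \<Rightarrow> 'a \<Rightarrow> 'a"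
    and ident :: 'a and tau :: "nat \<Rightarrow> 'a \<Rightarrow> 'a" and mu e :: 'a
  assumes "cyclic_operad_mult sm Op pcomp ident tau mu e"
  shows "(\<forall>n. submodule sm (cyc_cochains Op tau n))
    \<and> (\<forall>n f. f \<in> cyc_cochains Op tau n \<longrightarrow> cdiff pcomp mu n f \<in> cyc_cochains Op tau (Suc n))
    \<and> (\<forall>m n f g. f \<in> cyc_cochains Op tau m \<longrightarrow> g \<in> cyc_cochains Op tau n \<longrightarrow>
          bracket pcomp m n f g \<in> cyc_cochains Op tau (m + n - 1))"
proof -
  interpret cyclic_operad_mult sm Op pcomp ident tau mu e by (rule assms)
  show ?thesis
    using submodule_cyc_cochains cdiff_cyc_cochains bracket_cyc_cochains by blast
qed

end
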